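(* For every integer $N\ge 0$, let $T_{1\times 4}(7,N)$ be the number of tilings of a $7\times n$ rectangle, $n=4N/7$, by $N$ tiles of size $1\times 4$ (and $0$ if $4N/7\notin\mathbb{Z}$). Then, as formal power series, \[ \sum_{N\ge 0} T_{1\times 4}(7,N)\,z^N=\frac{(1-z^7)^3}{1-8z^7+6z^{14}-4z^{21}+z^{28}}. \]
   Context: A tiling of an $m\times n$ rectangle (width $m$, length $n$, made of $mn$ unit squares) by $a\times b$ tiles is a partition of the rectangle into non-overlapping axis-parallel $a\times b$ rectangles with integer corner coordinates, each placed in either of its two orientations. Tilings related by reflections or rotations of the rectangle are counted as distinct. The empty tiling counts once for $N=0$. *)

theory Defs
  imports "HOL-Computational_Algebra.Formal_Power_Series"
begin

text \<open>Cells of the board are unit squares indexed by (i,j) with i < m (width), j < n (length).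
  A tile placed with lower corner (x,y), extent w in the first and h in the second coordinate:\<close>
definition rect :: "nat \<Rightarrow> nat \<Rightarrow> nat \<Rightarrow> nat \<Rightarrow> (nat \<times> nat) set" where
  "rect x y w h = {x..<x+w} \<times> {y..<y+h}"

definition is_tile :: "nat \<Rightarrow> nat \<Rightarrow> (nat \<times> nat) set \<Rightarrow> bool" where
  "is_tile a b t \<longleftrightarrow> (\<exists>x y. t = rect x y a b \<or> t = rect x y b a)"

definition is_tiling :: "nat \<Rightarrow> nat \<Rightarrow> nat \<Rightarrow> nat \<Rightarrow> (nat \<times> nat) set set \<Rightarrow> bool" where
  "is_tiling a b m n T \<longleftrightarrow>
     (\<forall>t\<in>T. is_tile a b t) \<and> pairwise disjnt T \<and> \<Union>T = {0..<m} \<times> {0..<n}"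

definition tilings_count :: "nat \<Rightarrow> nat \<Rightarrow> nat \<Rightarrow> nat \<Rightarrow> nat" where
  "tilings_count a b m n = card {T. is_tiling a b m n T}"

definition T14_7 :: "nat \<Rightarrow> nat" where
  "T14_7 N = (if 7 dvd (4 * N) then tilings_count 1 4 7 (4 * N div 7) else 0)"

end

theory Submission
  imports Defs
begin

text \<open>Transfer-matrix method. Tile the board column by column. Before a column is filled,
  each of the 7 rows is already covered by a horizontal tile for the next 0 to 3 columns; this
  list of overhangs, the profile, is the state. Exactly 52 profiles are reachable from the flat
  one, and the number \<open>c n d\<close> of ways to finish \<open>n\<close> remaining columns from profile \<open>d\<close>
  obeys a linear recursion over these states. Computing \<open>c n\<close> for \<open>n \<le> 16\<close> shows that
  \<open>c (n+16) - 8 c (n+12) + 6 c (n+8) - 4 c (n+4) + c n\<close> vanishes at \<open>n = 0\<close> on every reachable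
  profile; since it obeys the same recursion, it vanishes for all \<open>n\<close>. As \<open>4q\<close> columns carry
  \<open>7q\<close> tiles, this recurrence and the initial values 1, 5, 37, 269 give the generating
  function in \<open>z\<^sup>7\<close>.\<close>

section \<open>Tilings of a region\<close>

definition tilings :: "nat \<Rightarrow> nat \<Rightarrow> (nat \<times> nat) set \<Rightarrow> (nat \<times> nat) set set set" where
  "tilings a b R = {T. (\<forall>t\<in>T. is_tile a b t) \<and> pairwise disjnt T \<and> \<Union>T = R}"

lemma tilings_count_eq_card_tilings:
  "tilings_count a b m n = card (tilings a b ({0..<m} \<times> {0..<n}))"
  by (simp add: tilings_count_def tilings_def is_tiling_def)

lemma finite_tilings: "finite R \<Longrightarrow> finite (tilings a b R)"
  by (rule finite_subset[of _ "Pow (Pow R)"]) (auto simp: tilings_def)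

lemma tile_nonempty: "is_tile a b t \<Longrightarrow> 0 < a \<Longrightarrow> 0 < b \<Longrightarrow> t \<noteq> {}"
  by (force simp: is_tile_def rect_def)

lemma tilings_empty: "0 < a \<Longrightarrow> 0 < b \<Longrightarrow> tilings a b {} = {{}}"
  by (auto simp: tilings_def dest: tile_nonempty)

lemma card_tilings_containing:
  assumes tile: "is_tile a b t" and "t \<noteq> {}"
  shows "card {T \<in> tilings a b R. t \<in> T} = (if t \<subseteq> R then card (tilings a b (R - t)) else 0)"
proof (cases "t \<subseteq> R")
  case False
  then have "{T \<in> tilings a b R. t \<in> T} = {}" by (auto simp: tilings_def)
  with False show ?thesis by (simp only: card.empty if_False)
next
  case True
  have remove: "T - {t} \<in> tilings a b (R - t)" if "T \<in> tilings a b R" "t \<in> T" for T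
  proof -
    have "disjnt s t" if "s \<in> T" "s \<noteq> t" for s
      using \<open>T \<in> tilings a b R\<close> \<open>t \<in> T\<close> that by (auto simp: tilings_def pairwise_def)
    then have "\<Union>(T - {t}) = R - t"
      using that by (auto simp: tilings_def disjnt_def)
    then show ?thesis using that by (auto simp: tilings_def pairwise_def)
  qed
  have insert: "insert t T \<in> tilings a b R" "t \<notin> T" if "T \<in> tilings a b (R - t)" for T
  proof -
    have "disjnt s t" if "s \<in> T" for s
      using \<open>T \<in> tilings a b (R - t)\<close> that by (auto simp: tilings_def disjnt_def)
    then show "insert t T \<in> tilings a b R"
      using that tile True by (auto simp: tilings_def pairwise_insert disjnt_sym)
    show "t \<notin> T"
      using that \<open>t \<noteq> {}\<close> by (auto simp: tilings_def)
  qed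
  have "bij_betw (\<lambda>T. T - {t}) {T \<in> tilings a b R. t \<in> T} (tilings a b (R - t))"
    by (rule bij_betw_byWitness[where f' = "insert t"]) (use remove insert in auto)
  with True show ?thesis by (simp add: bij_betw_same_card)
qed

text \<open>The first cell of \<open>R\<close> (least column, then least row) is the corner of the tile
  covering it, so that tile is one of the two placements with corner there.\<close>
lemma card_tilings_first_cell:
  assumes "finite R" and c: "(x0, y0) \<in> R"
    and first: "\<And>x y. (x, y) \<in> R \<Longrightarrow> y0 < y \<or> (y0 = y \<and> x0 \<le> x)"
    and "0 < a" "0 < b" "a \<noteq> b"
  shows "card (tilings a b R) =
    (if rect x0 y0 a b \<subseteq> R then card (tilings a b (R - rect x0 y0 a b)) else 0) +
    (if rect x0 y0 b a \<subseteq> R then card (tilings a b (R - rect x0 y0 b a)) else 0)"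
proof -
  define h v where "h = rect x0 y0 a b" and "v = rect x0 y0 b a"
  have tiles: "is_tile a b h" "is_tile a b v"
    by (auto simp: is_tile_def h_def v_def)
  then have "h \<noteq> {}" "v \<noteq> {}"
    using \<open>0 < a\<close> \<open>0 < b\<close> by (auto dest: tile_nonempty)
  have corner: "(x0, y0) \<in> h" "(x0, y0) \<in> v"
    using \<open>0 < a\<close> \<open>0 < b\<close> by (auto simp: h_def v_def rect_def)
  have "h \<noteq> v"
  proof
    assume "h = v"
    moreover have "(x0 + a - 1, y0 + b - 1) \<in> h"
      using \<open>0 < a\<close> \<open>0 < b\<close> by (auto simp: h_def rect_def)
    ultimately show False
      using \<open>a \<noteq> b\<close> by (auto simp: v_def rect_def)
  qed
  have covered: "h \<in> T \<or> v \<in> T" if T: "T \<in> tilings a b R" for T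
  proof -
    obtain t where t: "t \<in> T" "(x0, y0) \<in> t"
      using T c unfolding tilings_def by blast
    then obtain x y where xy: "t = rect x y a b \<or> t = rect x y b a"
      using T t(1) unfolding tilings_def is_tile_def by blast
    have "t \<subseteq> R" using T t by (auto simp: tilings_def)
    moreover have "(x, y) \<in> t" using xy t by (auto simp: rect_def)
    ultimately have "y0 < y \<or> (y0 = y \<and> x0 \<le> x)"
      using first by blast
    moreover have "x \<le> x0" "y \<le> y0"
      using xy t(2) by (auto simp: rect_def)
    ultimately have "x = x0" "y = y0"
      by auto
    then show ?thesis using xy t by (auto simp: h_def v_def)
  qed
  have "tilings a b R = {T \<in> tilings a b R. h \<in> T} \<union> {T \<in> tilings a b R. v \<in> T}"
    using covered by auto
  moreover have "{T \<in> tilings a b R. h \<in> T} \<inter> {T \<in> tilings a b R. v \<in> T} = {}"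
  proof -
    have "\<not> disjnt h v"
      using corner by (auto simp: disjnt_def)
    then show ?thesis
      using \<open>h \<noteq> v\<close> by (auto simp: tilings_def pairwise_def)
  qed
  ultimately have "card (tilings a b R) =
      card {T \<in> tilings a b R. h \<in> T} + card {T \<in> tilings a b R. v \<in> T}"
    using finite_tilings[OF \<open>finite R\<close>] by (metis (no_types, lifting) card_Un_disjoint finite_Un)
  then show ?thesis
    using card_tilings_containing[OF tiles(1) \<open>h \<noteq> {}\<close>]
      card_tilings_containing[OF tiles(2) \<open>v \<noteq> {}\<close>]
    by (simp add: h_def v_def)
qed

section \<open>Profiles\<close>

text \<open>Profile \<open>d\<close> at column \<open>j\<close>: row \<open>x\<close> is already covered up to column
  \<open>j + d ! x\<close>. A profile reaching beyond the last column \<open>m\<close> cannot come from a tiling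
  of the board, so it gets count 0 rather than that of its truncated region.\<close>
definition profile_region :: "nat list \<Rightarrow> nat \<Rightarrow> nat \<Rightarrow> (nat \<times> nat) set" where
  "profile_region d j m = {(x, y). x < length d \<and> j + d ! x \<le> y \<and> y < m}"

definition profile_count :: "nat list \<Rightarrow> nat \<Rightarrow> nat \<Rightarrow> nat" where
  "profile_count d j m =
     (if \<forall>v\<in>set d. j + v \<le> m then card (tilings 1 4 (profile_region d j m)) else 0)"

lemma finite_profile_region: "finite (profile_region d j m)"
  by (rule finite_subset[of _ "{..<length d} \<times> {..<m}"]) (auto simp: profile_region_def)

lemma profile_region_remove_horizontal:
  "profile_region (p @ 0 # r) j m - rect (length p) j 1 4 = profile_region (p @ 4 # r) j m"
  by (auto simp: profile_region_def rect_def nth_append nth_Cons' split: if_splits)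

lemma profile_region_remove_vertical:
  "profile_region (p @ 0 # 0 # 0 # 0 # r) j m - rect (length p) j 4 1 =
   profile_region (p @ 1 # 1 # 1 # 1 # r) j m"
  by (auto simp: profile_region_def rect_def nth_append nth_Cons' split: if_splits)

lemma profile_first_cell:
  assumes "\<forall>v\<in>set p. 0 < v" "(x, y) \<in> profile_region (p @ 0 # r) j m"
  shows "j < y \<or> (j = y \<and> length p \<le> x)"
proof (cases "x < length p")
  case True
  then have "0 < p ! x"
    using assms(1) nth_mem by blast
  then show ?thesis
    using assms(2) True by (auto simp: profile_region_def nth_append)
qed (use assms(2) in \<open>auto simp: profile_region_def nth_append\<close>)

lemma take_3_eq_zeros_iff: "take 3 r = [0, 0, 0] \<longleftrightarrow> (\<exists>r'. r = 0 # 0 # 0 # r')"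
proof
  assume "take 3 r = [0, 0, 0]"
  then have "r = [0, 0, 0] @ drop 3 r"
    by (metis append_take_drop_id)
  then show "\<exists>r'. r = 0 # 0 # 0 # r'"
    by auto
qed (auto simp: numeral_3_eq_3)

lemma rect_vertical_subset_profile_region:
  assumes "j < m"
  shows "rect (length p) j 4 1 \<subseteq> profile_region (p @ 0 # r) j m \<longleftrightarrow> take 3 r = [0, 0, 0]"
proof
  assume sub: "rect (length p) j 4 1 \<subseteq> profile_region (p @ 0 # r) j m"
  have "(length p + Suc k, j) \<in> profile_region (p @ 0 # r) j m" if "k < 3" for k
    by (rule subsetD[OF sub]) (use that in \<open>simp add: rect_def\<close>)
  then have zero: "k < length r \<and> r ! k = 0" if "k < 3" for k
    using that by (simp add: profile_region_def nth_append)
  then obtain x y z r' where "r = x # y # z # r'"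
    by (metis Suc_le_eq le_refl numeral_3_eq_3 Suc_le_length_iff)
  then show "take 3 r = [0, 0, 0]"
    using zero[of 0] zero[of 1] zero[of 2] by simp
next
  assume "take 3 r = [0, 0, 0]"
  then obtain r' where "r = 0 # 0 # 0 # r'"
    using take_3_eq_zeros_iff by blast
  then show "rect (length p) j 4 1 \<subseteq> profile_region (p @ 0 # r) j m"
    using assms by (auto simp: rect_def profile_region_def nth_append nth_Cons')
qed

lemma rect_horizontal_subset_profile_region:
  "rect (length p) j 1 4 \<subseteq> profile_region (p @ 0 # r) j m \<longleftrightarrow> j + 4 \<le> m"
proof
  assume "rect (length p) j 1 4 \<subseteq> profile_region (p @ 0 # r) j m"
  moreover have "(length p, j + 3) \<in> rect (length p) j 1 4"
    by (simp add: rect_def)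
  ultimately show "j + 4 \<le> m"
    by (auto simp: profile_region_def)
qed (auto simp: rect_def profile_region_def)

lemma profile_count_overshoot: "v \<in> set d \<Longrightarrow> m < j + v \<Longrightarrow> profile_count d j m = 0"
  unfolding profile_count_def by (rule if_not_P) (force simp: not_le)

text \<open>Row \<open>length p\<close> holds the first uncovered cell of column \<open>j\<close>; the tile covering it
  is placed either horizontally or vertically.\<close>
lemma profile_count_gap:
  assumes pos: "\<forall>v\<in>set p. 0 < v" and "j < m"
  shows "profile_count (p @ 0 # r) j m = profile_count (p @ 4 # r) j m +
    (if take 3 r = [0, 0, 0] then profile_count (p @ 1 # 1 # 1 # 1 # drop 3 r) j m else 0)"
proof (cases "\<forall>v\<in>set (p @ 0 # r). j + v \<le> m")
  case False
  then obtain v where v: "v \<in> set p \<union> set r" "m < j + v"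
    using \<open>j < m\<close> by (auto simp: not_le)
  have "profile_count (p @ 0 # r) j m = 0" "profile_count (p @ 4 # r) j m = 0"
    using v by (auto intro: profile_count_overshoot)
  moreover have "profile_count (p @ 1 # 1 # 1 # 1 # drop 3 r) j m = 0" if "take 3 r = [0, 0, 0]"
  proof -
    from that obtain r' where "r = 0 # 0 # 0 # r'"
      using take_3_eq_zeros_iff by blast
    with v \<open>j < m\<close> show ?thesis
      by (auto intro: profile_count_overshoot)
  qed
  ultimately show ?thesis
    by simp
next
  case True
  let ?R = "profile_region (p @ 0 # r) j m"
  let ?h = "rect (length p) j 1 4" and ?v = "rect (length p) j 4 1"
  have "card (tilings 1 4 ?R) =
      (if ?h \<subseteq> ?R then card (tilings 1 4 (?R - ?h)) else 0) +
      (if ?v \<subseteq> ?R then card (tilings 1 4 (?R - ?v)) else 0)"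
    by (rule card_tilings_first_cell[OF finite_profile_region])
      (use profile_first_cell[OF pos] \<open>j < m\<close> in \<open>auto simp: profile_region_def\<close>)
  also have "(if ?h \<subseteq> ?R then card (tilings 1 4 (?R - ?h)) else 0) =
      profile_count (p @ 4 # r) j m"
    unfolding rect_horizontal_subset_profile_region profile_region_remove_horizontal
      profile_count_def
    using True by auto
  also have "(if ?v \<subseteq> ?R then card (tilings 1 4 (?R - ?v)) else 0) =
      (if take 3 r = [0, 0, 0] then profile_count (p @ 1 # 1 # 1 # 1 # drop 3 r) j m else 0)"
  proof (cases "take 3 r = [0, 0, 0]")
    case True
    then obtain r' where r: "r = 0 # 0 # 0 # r'"
      using take_3_eq_zeros_iff by blast
    have "\<forall>v\<in>set (p @ 1 # 1 # 1 # 1 # r'). j + v \<le> m"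
      using \<open>\<forall>v\<in>set (p @ 0 # r). j + v \<le> m\<close> \<open>j < m\<close> r by auto
    then show ?thesis
      unfolding r rect_vertical_subset_profile_region[OF \<open>j < m\<close>]
        profile_region_remove_vertical profile_count_def
      by simp
  qed (unfold rect_vertical_subset_profile_region[OF \<open>j < m\<close>], simp)
  finally show ?thesis
    using True by (simp add: profile_count_def)
qed

lemma profile_count_advance:
  assumes pos: "\<forall>v\<in>set p. 0 < v"
  shows "profile_count p j (Suc j + n) = profile_count (map (\<lambda>v. v - 1) p) (Suc j) (Suc j + n)"
proof -
  have shift: "j + v = Suc j + (v - 1)" if "v \<in> set p" for v
    using pos that by auto
  have "(x, y) \<in> profile_region p j (Suc j + n) \<longleftrightarrow>
      (x, y) \<in> profile_region (map (\<lambda>v. v - 1) p) (Suc j) (Suc j + n)" for x y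
  proof (cases "x < length p")
    case True
    then have "j + p ! x = Suc j + (p ! x - 1)"
      using shift nth_mem by blast
    with True show ?thesis
      by (simp add: profile_region_def)
  qed (simp add: profile_region_def)
  then have "profile_region p j (Suc j + n) = profile_region (map (\<lambda>v. v - 1) p) (Suc j) (Suc j + n)"
    by auto
  moreover have "(\<forall>v\<in>set p. j + v \<le> Suc j + n) \<longleftrightarrow>
      (\<forall>v\<in>set (map (\<lambda>v. v - 1) p). Suc j + v \<le> Suc j + n)"
    using shift by auto
  ultimately show ?thesis
    unfolding profile_count_def by presburger
qed

text \<open>The profiles after filling the current column and moving to the next one, scanning
  the rows in order: a covered row gets one column closer, an uncovered row starts either a
  horizontal tile or, together with the next three rows, a vertical tile.\<close>
fun next_profiles :: "nat list \<Rightarrow> nat list list" where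
  "next_profiles [] = [[]]"
| "next_profiles (a # r) =
    (if 0 < a then map (Cons (a - 1)) (next_profiles r)
     else map (Cons 3) (next_profiles r) @
       (if take 3 r = [0, 0, 0] then map (\<lambda>e. 0 # 0 # 0 # 0 # e) (next_profiles (drop 3 r))
        else []))"

fun completions :: "nat \<Rightarrow> nat list \<Rightarrow> nat" where
  "completions 0 d = (if \<forall>v\<in>set d. v = 0 then 1 else 0)"
| "completions (Suc n) d = (\<Sum>e\<leftarrow>next_profiles d. completions n e)"

lemma profile_count_next_column:
  "\<forall>v\<in>set p. 0 < v \<Longrightarrow> profile_count (p @ r) j (Suc j + n) =
     (\<Sum>e\<leftarrow>next_profiles r. profile_count (map (\<lambda>v. v - 1) p @ e) (Suc j) (Suc j + n))"
proof (induction r arbitrary: p rule: next_profiles.induct)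
  case 1
  then show ?case
    using profile_count_advance[OF "1"] by simp
next
  case (2 a r)
  show ?case
  proof (cases "0 < a")
    case True
    then show ?thesis
      using "2.IH"(1)[of "p @ [a]"] "2.prems" by (simp add: o_def)
  next
    case False
    have horizontal: "profile_count (p @ 4 # r) j (Suc j + n) =
       (\<Sum>e\<leftarrow>next_profiles r. profile_count (map (\<lambda>v. v - 1) p @ 3 # e) (Suc j) (Suc j + n))"
      using "2.IH"(2)[OF False, of "p @ [4]"] "2.prems" by (simp add: o_def)
    have vertical: "profile_count (p @ 1 # 1 # 1 # 1 # drop 3 r) j (Suc j + n) =
       (\<Sum>e\<leftarrow>next_profiles (drop 3 r).
          profile_count (map (\<lambda>v. v - 1) p @ 0 # 0 # 0 # 0 # e) (Suc j) (Suc j + n))"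
      if "take 3 r = [0, 0, 0]"
      using "2.IH"(3)[OF False that, of "p @ [1, 1, 1, 1]"] "2.prems" by (simp add: o_def)
    show ?thesis
      using profile_count_gap[OF "2.prems", of j "Suc j + n" r] False horizontal vertical
      by (simp add: o_def)
  qed
qed

lemma profile_count_eq_completions: "profile_count d j (j + n) = completions n d"
proof (induction n arbitrary: j d)
  case 0
  have "profile_region d j j = {}"
    by (auto simp: profile_region_def)
  then have "card (tilings 1 4 (profile_region d j j)) = 1"
    by (simp add: tilings_empty)
  moreover have "(\<forall>v\<in>set d. j + v \<le> j) \<longleftrightarrow> (\<forall>v\<in>set d. v = 0)"
    by auto
  ultimately show ?case
    by (simp add: profile_count_def)
next
  case (Suc n)
  have "profile_count e (Suc j) (Suc j + n) = completions n e" for e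
    using Suc.IH .
  then show ?case
    using profile_count_next_column[of "[]" d j n] by simp
qed

lemma tilings_count_eq_completions: "tilings_count 1 4 m n = completions n (replicate m 0)"
proof -
  have "profile_region (replicate m 0) 0 n = {0..<m} \<times> {0..<n}"
    by (auto simp: profile_region_def)
  then show ?thesis
    using profile_count_eq_completions[of "replicate m 0" 0 n]
    by (simp add: profile_count_def tilings_count_eq_card_tilings)
qed

section \<open>The 52 reachable profiles\<close>

text \<open>With numerals for \<open>n\<close> and \<open>m\<close> this unfolds exactly one level of \<open>completions\<close>,
  so that the evaluation below proceeds level by level instead of recursing to the bottom.\<close>
lemma completions_step:
  "n = Suc m \<Longrightarrow> completions n d = (\<Sum>e\<leftarrow>next_profiles d. completions m e)"
  by simp

text \<open>The profiles reachable from the flat profile of 7 rows.\<close>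
definition profiles :: "nat list list" where
  "profiles = [[0,0,0,0,0,0,0], [0,0,0,0,1,1,1], [0,0,0,0,2,2,2], [0,0,0,0,3,3,3],
    [0,0,0,1,1,1,1], [0,0,0,2,2,2,2], [0,0,0,3,3,3,3], [0,0,1,1,1,1,0], [0,0,2,2,2,2,0],
    [0,0,3,3,3,3,0], [0,1,1,1,1,0,0], [0,2,2,2,2,0,0], [0,3,3,3,3,0,0], [1,0,0,0,0,1,1],
    [1,1,0,0,0,0,1], [1,1,1,0,0,0,0], [1,1,1,1,0,0,0], [1,1,1,1,1,1,1], [1,1,1,1,2,2,2],
    [1,1,1,1,3,3,3], [1,1,1,2,2,2,2], [1,1,1,3,3,3,3], [1,1,2,2,2,2,1], [1,1,3,3,3,3,1],
    [1,2,2,2,2,1,1], [1,3,3,3,3,1,1], [2,0,0,0,0,2,2], [2,1,1,1,1,2,2], [2,2,0,0,0,0,2],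
    [2,2,1,1,1,1,2], [2,2,2,0,0,0,0], [2,2,2,1,1,1,1], [2,2,2,2,0,0,0], [2,2,2,2,1,1,1],
    [2,2,2,2,2,2,2], [2,2,2,2,3,3,3], [2,2,2,3,3,3,3], [2,2,3,3,3,3,2], [2,3,3,3,3,2,2],
    [3,0,0,0,0,3,3], [3,1,1,1,1,3,3], [3,2,2,2,2,3,3], [3,3,0,0,0,0,3], [3,3,1,1,1,1,3],
    [3,3,2,2,2,2,3], [3,3,3,0,0,0,0], [3,3,3,1,1,1,1], [3,3,3,2,2,2,2], [3,3,3,3,0,0,0],
    [3,3,3,3,1,1,1], [3,3,3,3,2,2,2], [3,3,3,3,3,3,3]]"

lemma next_profiles_closed: "\<forall>d\<in>set profiles. set (next_profiles d) \<subseteq> set profiles"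
  unfolding profiles_def by simp

lemma completions_profiles_1:
  "map (completions 1) profiles =
    [0,1,0,0,0,0,0,0,0,0,0,0,0,1,1,1,0,1,0,0,0,0,0,0,0,0,0,0,0,0,0,0,0,0,0,0,0,0,0,0,0,0,0,
     0,0,0,0,0,0,0,0,0]"
  unfolding profiles_def by (simp add: completions_step[of 1 0])

lemma completions_profiles_2:
  "map (completions 2) profiles =
    [0,0,1,0,0,0,0,0,0,0,0,0,0,0,0,0,0,0,1,0,0,0,0,0,0,0,1,1,1,1,1,1,0,0,1,0,0,0,0,0,0,0,0,
     0,0,0,0,0,0,0,0,0]"
  using completions_profiles_1 unfolding profiles_def
  by (simp add: completions_step[of 2 1])

lemma completions_profiles_3:
  "map (completions 3) profiles =
    [0,0,0,1,0,0,0,0,0,0,0,0,0,0,0,0,0,0,0,1,0,0,0,0,0,0,0,0,0,0,0,0,0,0,0,1,0,0,0,1,1,1,1,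
     1,1,1,1,1,0,0,0,1]"
  using completions_profiles_2 unfolding profiles_def
  by (simp add: completions_step[of 3 2])

lemma completions_profiles_4:
  "map (completions 4) profiles =
    [5,0,0,0,1,1,1,1,1,1,1,1,1,0,0,0,1,0,0,0,0,0,0,0,0,0,0,0,0,0,0,0,1,0,0,0,0,0,0,0,0,0,0,
     0,0,0,0,0,1,0,0,0]"
  using completions_profiles_3 unfolding profiles_def
  by (simp add: completions_step[of 4 3])

lemma completions_profiles_5:
  "map (completions 5) profiles =
    [0,6,0,0,0,0,0,0,0,0,0,0,0,6,6,6,0,5,0,0,1,1,1,1,1,1,0,0,0,0,0,0,0,1,0,0,0,0,0,0,0,0,0,
     0,0,0,0,0,0,1,0,0]"
  using completions_profiles_4 unfolding profiles_def
  by (simp add: completions_step[of 5 4])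

lemma completions_profiles_6:
  "map (completions 6) profiles =
    [0,0,7,0,0,0,0,0,0,0,0,0,0,0,0,0,0,0,6,0,0,0,0,0,0,0,7,6,7,6,7,6,0,0,5,0,1,1,1,0,0,0,0,
     0,0,0,0,0,0,0,1,0]"
  using completions_profiles_5 unfolding profiles_def
  by (simp add: completions_step[of 6 5])

lemma completions_profiles_7:
  "map (completions 7) profiles =
    [0,0,0,8,0,0,0,0,0,0,0,0,0,0,0,0,0,0,0,7,0,0,0,0,0,0,0,0,0,0,0,0,0,0,0,6,0,0,0,8,7,6,8,
     7,6,8,7,6,0,0,0,5]"
  using completions_profiles_6 unfolding profiles_def
  by (simp add: completions_step[of 7 6])

lemma completions_profiles_8:
  "map (completions 8) profiles =
    [37,0,0,0,8,7,6,8,7,6,8,7,6,0,0,0,8,0,0,0,0,0,0,0,0,0,0,0,0,0,0,0,7,0,0,0,0,0,0,0,0,0,0,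
     0,0,0,0,0,6,0,0,0]"
  using completions_profiles_7 unfolding profiles_def
  by (simp add: completions_step[of 8 7])

lemma completions_profiles_9:
  "map (completions 9) profiles =
    [0,43,0,0,0,0,0,0,0,0,0,0,0,43,43,43,0,37,0,0,8,7,8,7,8,7,0,0,0,0,0,0,0,8,0,0,0,0,0,0,0,
     0,0,0,0,0,0,0,0,7,0,0]"
  using completions_profiles_8 unfolding profiles_def
  by (simp add: completions_step[of 9 8])

lemma completions_profiles_10:
  "map (completions 10) profiles =
    [0,0,50,0,0,0,0,0,0,0,0,0,0,0,0,0,0,0,43,0,0,0,0,0,0,0,50,43,50,43,50,43,0,0,37,0,8,8,8,
     0,0,0,0,0,0,0,0,0,0,0,8,0]"
  using completions_profiles_9 unfolding profiles_def
  by (simp add: completions_step[of 10 9])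

lemma completions_profiles_11:
  "map (completions 11) profiles =
    [0,0,0,58,0,0,0,0,0,0,0,0,0,0,0,0,0,0,0,50,0,0,0,0,0,0,0,0,0,0,0,0,0,0,0,43,0,0,0,58,50,
     43,58,50,43,58,50,43,0,0,0,37]"
  using completions_profiles_10 unfolding profiles_def
  by (simp add: completions_step[of 11 10])

lemma completions_profiles_12:
  "map (completions 12) profiles =
    [269,0,0,0,58,50,43,58,50,43,58,50,43,0,0,0,58,0,0,0,0,0,0,0,0,0,0,0,0,0,0,0,50,0,0,0,0,
     0,0,0,0,0,0,0,0,0,0,0,43,0,0,0]"
  using completions_profiles_11 unfolding profiles_def
  by (simp add: completions_step[of 12 11])

lemma completions_profiles_13:
  "map (completions 13) profiles =
    [0,312,0,0,0,0,0,0,0,0,0,0,0,312,312,312,0,269,0,0,58,50,58,50,58,50,0,0,0,0,0,0,0,58,0,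
     0,0,0,0,0,0,0,0,0,0,0,0,0,0,50,0,0]"
  using completions_profiles_12 unfolding profiles_def
  by (simp add: completions_step[of 13 12])

lemma completions_profiles_14:
  "map (completions 14) profiles =
    [0,0,362,0,0,0,0,0,0,0,0,0,0,0,0,0,0,0,312,0,0,0,0,0,0,0,362,312,362,312,362,312,0,0,
     269,0,58,58,58,0,0,0,0,0,0,0,0,0,0,0,58,0]"
  using completions_profiles_13 unfolding profiles_def
  by (simp add: completions_step[of 14 13])

lemma completions_profiles_15:
  "map (completions 15) profiles =
    [0,0,0,420,0,0,0,0,0,0,0,0,0,0,0,0,0,0,0,362,0,0,0,0,0,0,0,0,0,0,0,0,0,0,0,312,0,0,0,
     420,362,312,420,362,312,420,362,312,0,0,0,269]"
  using completions_profiles_14 unfolding profiles_def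
  by (simp add: completions_step[of 15 14])

lemma completions_profiles_16:
  "map (completions 16) profiles =
    [1949,0,0,0,420,362,312,420,362,312,420,362,312,0,0,0,420,0,0,0,0,0,0,0,0,0,0,0,0,0,0,0,
     362,0,0,0,0,0,0,0,0,0,0,0,0,0,0,0,312,0,0,0]"
  using completions_profiles_15 unfolding profiles_def
  by (simp add: completions_step[of 16 15])

section \<open>The recurrence\<close>

lemma transfer_recursion_eq_0:
  fixes f :: "nat \<Rightarrow> 'a \<Rightarrow> 'b::comm_monoid_add"
  assumes step: "\<And>n d. f (Suc n) d = (\<Sum>e\<leftarrow>succ d. f n e)"
    and closed: "\<And>d. d \<in> S \<Longrightarrow> set (succ d) \<subseteq> S"
    and base: "\<And>d. d \<in> S \<Longrightarrow> f 0 d = 0"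
  shows "d \<in> S \<Longrightarrow> f n d = 0"
proof (induction n arbitrary: d)
  case 0
  then show ?case
    by (rule base)
next
  case (Suc n)
  then have "(\<Sum>e\<leftarrow>succ d. f n e) = (\<Sum>e\<leftarrow>succ d. 0)"
    using closed by (intro arg_cong[where f = sum_list] map_cong) auto
  then show ?case
    by (simp add: step)
qed

definition recurrence_defect :: "nat \<Rightarrow> nat list \<Rightarrow> int" where
  "recurrence_defect n d = int (completions (n + 16) d) - 8 * int (completions (n + 12) d)
     + 6 * int (completions (n + 8) d) - 4 * int (completions (n + 4) d) + int (completions n d)"

lemma recurrence_defect_Suc:
  "recurrence_defect (Suc n) d = (\<Sum>e\<leftarrow>next_profiles d. recurrence_defect n e)"
proof -
  have "completions (Suc n + k) d = (\<Sum>e\<leftarrow>next_profiles d. completions (n + k) e)" for k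
    by simp
  from this[of 0] this[of 4] this[of 8] this[of 12] this[of 16] show ?thesis
    by (simp add: recurrence_defect_def sum_list_addf sum_list_subtractf sum_list_const_mult
        o_def flip: sum_list_of_nat)
qed

lemma recurrence_defect_profiles: "\<forall>d\<in>set profiles. recurrence_defect 0 d = 0"
  unfolding recurrence_defect_def profiles_def
  by (simp add: completions_profiles_4[unfolded profiles_def, simplified]
      completions_profiles_8[unfolded profiles_def, simplified]
      completions_profiles_12[unfolded profiles_def, simplified]
      completions_profiles_16[unfolded profiles_def, simplified])

lemma completions_recurrence:
  "recurrence_defect n [0, 0, 0, 0, 0, 0, 0] = 0"
proof (rule transfer_recursion_eq_0[of recurrence_defect next_profiles "set profiles"])
  show "recurrence_defect (Suc m) d = (\<Sum>e\<leftarrow>next_profiles d. recurrence_defect m e)" for m d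
    by (rule recurrence_defect_Suc)
  show "set (next_profiles d) \<subseteq> set profiles" if "d \<in> set profiles" for d
    using next_profiles_closed that by blast
  show "recurrence_defect 0 d = 0" if "d \<in> set profiles" for d
    using recurrence_defect_profiles that by blast
  show "[0, 0, 0, 0, 0, 0, 0] \<in> set profiles"
    by (simp add: profiles_def)
qed

section \<open>Generating function\<close>

lemma Abs_fps_compose_fps_X_power:
  fixes b :: "nat \<Rightarrow> 'a::comm_ring_1"
  assumes "0 < k"
  shows "Abs_fps b oo fps_X ^ k = Abs_fps (\<lambda>n. if k dvd n then b (n div k) else 0)"
proof (rule fps_ext)
  fix n
  have "n = k * i \<longleftrightarrow> k dvd n \<and> i = n div k" for i
    using assms by auto
  then have "fps_nth (Abs_fps b oo fps_X ^ k) n =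
      (\<Sum>i = 0..n. if k dvd n \<and> i = n div k then b i else 0)"
    by (simp add: fps_compose_nth power_mult[symmetric] if_distrib cong: if_cong)
  also have "\<dots> = (if k dvd n then b (n div k) else 0)"
    by (auto simp: sum.delta' div_le_dividend)
  finally show "fps_nth (Abs_fps b oo fps_X ^ k) n =
      fps_nth (Abs_fps (\<lambda>n. if k dvd n then b (n div k) else 0)) n"
    by simp
qed

lemma completions_initial:
  "completions 0 [0, 0, 0, 0, 0, 0, 0] = 1" "completions 4 [0, 0, 0, 0, 0, 0, 0] = 5"
  "completions 8 [0, 0, 0, 0, 0, 0, 0] = 37" "completions 12 [0, 0, 0, 0, 0, 0, 0] = 269"
  by (simp_all add: completions_profiles_4[unfolded profiles_def, simplified]
      completions_profiles_8[unfolded profiles_def, simplified]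
      completions_profiles_12[unfolded profiles_def, simplified])

lemma completions_generating_function:
  "Abs_fps (\<lambda>q. of_nat (completions (4 * q) [0, 0, 0, 0, 0, 0, 0]) :: 'a::comm_ring_1) *
     (1 - 8 * fps_X + 6 * fps_X ^ 2 - 4 * fps_X ^ 3 + fps_X ^ 4) = (1 - fps_X) ^ 3"
  (is "?B * _ = _")
proof (rule fps_ext)
  fix q
  define c where "c q = (of_nat (completions (4 * q) [0, 0, 0, 0, 0, 0, 0]) :: 'a)" for q
  have "?B * (1 - 8 * fps_X + 6 * fps_X ^ 2 - 4 * fps_X ^ 3 + fps_X ^ 4) =
      ?B - 8 * (?B * fps_X ^ 1) + 6 * (?B * fps_X ^ 2) - 4 * (?B * fps_X ^ 3) + ?B * fps_X ^ 4"
    by (simp add: algebra_simps)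
  then have lhs: "fps_nth (?B * (1 - 8 * fps_X + 6 * fps_X ^ 2 - 4 * fps_X ^ 3 + fps_X ^ 4)) q =
      c q - 8 * (if q < 1 then 0 else c (q - 1)) + 6 * (if q < 2 then 0 else c (q - 2))
      - 4 * (if q < 3 then 0 else c (q - 3)) + (if q < 4 then 0 else c (q - 4))"
    unfolding c_def by (simp only: fps_X_power_mult_right_nth numeral_fps_const fps_add_nth fps_sub_nth
        fps_const_mult_left fps_nth_Abs_fps)
  have "(1 - fps_X) ^ 3 = (1 - 3 * fps_X + 3 * fps_X ^ 2 - fps_X ^ 3 :: 'a fps)"
    by (simp add: power3_eq_cube power2_eq_square algebra_simps)
  then have rhs: "fps_nth ((1 - fps_X) ^ 3 :: 'a fps) q =
      (if q = 0 then 1 else 0) - 3 * (if q = 1 then 1 else 0) + 3 * (if q = 2 then 1 else 0)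
      - (if q = 3 then 1 else 0)"
    by (simp add: numeral_fps_const)
  consider "q < 4" | p where "q = p + 4"
    by (metis add.commute le_Suc_ex not_less)
  then show "fps_nth (?B * (1 - 8 * fps_X + 6 * fps_X ^ 2 - 4 * fps_X ^ 3 + fps_X ^ 4)) q = fps_nth ((1 - fps_X) ^ 3) q"
  proof cases
    case 1
    then have "q = 0 \<or> q = 1 \<or> q = 2 \<or> q = 3"
      by auto
    then show ?thesis
      unfolding lhs rhs by (auto simp: c_def completions_initial)
  next
    case 2
    have "(of_int (recurrence_defect (4 * p) [0, 0, 0, 0, 0, 0, 0]) :: 'a) = 0"
      by (simp add: completions_recurrence)
    then have "c (p + 4) - 8 * c (p + 3) + 6 * c (p + 2) - 4 * c (p + 1) + c p = 0"
      by (simp add: recurrence_defect_def c_def algebra_simps)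
    then show ?thesis
      unfolding lhs rhs using 2 by (simp add: numeral_eq_Suc)
  qed
qed

lemma T14_7_eq_completions:
  "T14_7 N = (if 7 dvd N then completions (4 * (N div 7)) [0, 0, 0, 0, 0, 0, 0] else 0)"
proof -
  have "7 dvd 4 * N \<longleftrightarrow> 7 dvd N"
    by presburger
  moreover have "4 * N div 7 = 4 * (N div 7)" if "7 dvd N"
    using that by auto
  moreover have "tilings_count 1 4 7 n = completions n [0, 0, 0, 0, 0, 0, 0]" for n
    using tilings_count_eq_completions[of 7 n] by (simp add: numeral_eq_Suc)
  ultimately show ?thesis
    by (simp add: T14_7_def)
qed

lemma completions_fps:
  "Abs_fps (\<lambda>q. of_nat (completions (4 * q) [0, 0, 0, 0, 0, 0, 0]) :: 'a::field) =
     (1 - fps_X) ^ 3 / (1 - 8 * fps_X + 6 * fps_X ^ 2 - 4 * fps_X ^ 3 + fps_X ^ 4)"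
proof -
  have "fps_nth (1 - 8 * fps_X + 6 * fps_X ^ 2 - 4 * fps_X ^ 3 + fps_X ^ 4 :: 'a fps) 0 \<noteq> 0"
    by simp
  then have "(1 - 8 * fps_X + 6 * fps_X ^ 2 - 4 * fps_X ^ 3 + fps_X ^ 4 :: 'a fps) \<noteq> 0"
    by (metis fps_zero_nth)
  then show ?thesis
    by (metis completions_generating_function nonzero_mult_div_cancel_right)
qed

theorem mainTheorem6:
  shows "Abs_fps (\<lambda>N. of_nat (T14_7 N) :: rat) =
    (1 - fps_X ^ 7) ^ 3 / (1 - 8 * fps_X ^ 7 + 6 * fps_X ^ 14 - 4 * fps_X ^ 21 + fps_X ^ 28)"
proof -
  let ?B = "Abs_fps (\<lambda>q. of_nat (completions (4 * q) [0, 0, 0, 0, 0, 0, 0]) :: rat)"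
  let ?Q = "1 - 8 * fps_X + 6 * fps_X ^ 2 - 4 * fps_X ^ 3 + fps_X ^ 4 :: rat fps"
  have "Abs_fps (\<lambda>N. of_nat (T14_7 N) :: rat) = Abs_fps (\<lambda>N. if 7 dvd N
      then of_nat (completions (4 * (N div 7)) [0, 0, 0, 0, 0, 0, 0]) else 0)"
    by (rule fps_ext) (simp add: T14_7_eq_completions)
  also have "\<dots> = ?B oo fps_X ^ 7"
    by (simp add: Abs_fps_compose_fps_X_power)
  also have "\<dots> = ((1 - fps_X) ^ 3 oo fps_X ^ 7) / (?Q oo fps_X ^ 7)"
    unfolding completions_fps by (rule fps_divide_compose) simp_all
  also have "\<dots> = (1 - fps_X ^ 7) ^ 3 / (1 - 8 * fps_X ^ 7 + 6 * fps_X ^ 14 - 4 * fps_X ^ 21 + fps_X ^ 28)"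
    by (simp add: fps_compose_sub_distrib fps_compose_add_distrib fps_compose_mult_distrib
        fps_compose_power[symmetric] power_mult[symmetric])
  finally show ?thesis .
qed

end
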